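(* Let $\mathcal B_{\mathcal E}$ be the set of partitions $\beta_1+\cdots+\beta_n$ ($0<\beta_1\le\cdots\le\beta_n$) with $\beta_1\in\{2,3\}$ and, for each $2\le i\le n$: if $\beta_i$ is odd then $3\le\beta_i-\beta_{i-1}\le4$, and if $\beta_i$ is even then $0\le\beta_i-\beta_{i-1}\le1$. Let $b_{\mathcal E}(n)=\sum q^{|\beta|}$ over $\beta\in\mathcal B_{\mathcal E}$ with exactly $n$ parts ($b_{\mathcal E}(0)=1$). Then $$\sum_{n\ge0}\frac{b_{\mathcal E}(n)}{(q^2;q^2)_n}=1+\frac{q^2+q^3}{1-q^2}+\sum_{n\ge2}\frac{(-q^3;q^4)_{n-1}\,q^{2n}(1+q^{2n-1})}{(q^2;q^2)_n}.$$
   Context: $(a;q)_n=\prod_{j=0}^{n-1}(1-aq^j)$; $|\beta|$ is the sum of parts. *)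

theory Defs
  imports Complex_Main
begin

definition qpoch :: "complex \<Rightarrow> complex \<Rightarrow> nat \<Rightarrow> complex" where
  "qpoch a q n = (\<Prod>j<n. 1 - a * q ^ j)"

text \<open>A partition beta_1 + ... + beta_n with 0 < beta_1 <= ... <= beta_n, written as the
  list [beta_1, ..., beta_n] (index i of the list = part beta_(i+1)), lying in B_E.\<close>
definition in_BE :: "nat list \<Rightarrow> bool" where
  "in_BE \<beta> \<longleftrightarrow> \<beta> \<noteq> [] \<and> sorted \<beta> \<and> (\<forall>x\<in>set \<beta>. 0 < x) \<and>
     \<beta> ! 0 \<in> {2, 3} \<and>
     (\<forall>i. 1 \<le> i \<and> i < length \<beta> \<longrightarrow>
        (odd (\<beta> ! i) \<longrightarrow> \<beta> ! (i - 1) + 3 \<le> \<beta> ! i \<and> \<beta> ! i \<le> \<beta> ! (i - 1) + 4) \<and>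
        (even (\<beta> ! i) \<longrightarrow> \<beta> ! (i - 1) \<le> \<beta> ! i \<and> \<beta> ! i \<le> \<beta> ! (i - 1) + 1))"

definition bE :: "nat \<Rightarrow> complex \<Rightarrow> complex" where
  "bE n q = (if n = 0 then 1
             else (\<Sum>\<beta>\<in>{\<beta>. length \<beta> = n \<and> in_BE \<beta>}. q ^ sum_list \<beta>))"

end

theory Submission imports Defs begin

text \<open>In a partition from \<open>B_E\<close> a part \<open>x\<close> is followed either by the least even number
  \<open>e \<ge> x\<close> or by \<open>e + 3\<close>. The generating function of the
  \<open>n\<close> parts following \<open>x\<close> therefore satisfies a two-term recursion whose solution is
  \<open>q^(n e) (-q^3;q^4)_n\<close>; starting from \<open>2\<close> or \<open>3\<close> this gives
  \<open>b_E(n) = (-q^3;q^4)_(n-1) q^(2n) (1 + q^(2n-1))\<close>. The identity is then the splitting off of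
  the first two terms of a series whose term ratios tend to \<open>q^2\<close>.\<close>

lemma qpoch_Suc: "qpoch a q (Suc n) = qpoch a q n * (1 - a * q ^ n)"
  by (simp add: qpoch_def)


lemma successively_iff_nth:
  "successively P xs \<longleftrightarrow> (\<forall>i. 0 < i \<and> i < length xs \<longrightarrow> P (xs ! (i - 1)) (xs ! i))"
proof (induction P xs rule: successively.induct)
  case (3 P x y xs)
  show ?case
  proof
    assume "successively P (x # y # xs)"
    then show "\<forall>i. 0 < i \<and> i < length (x # y # xs) \<longrightarrow> P ((x # y # xs) ! (i - 1)) ((x # y # xs) ! i)"
      using "3" by (auto simp: nth_Cons split: nat.split)
  next
    assume H: "\<forall>i. 0 < i \<and> i < length (x # y # xs) \<longrightarrow> P ((x # y # xs) ! (i - 1)) ((x # y # xs) ! i)"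
    have "P x y" using H[rule_format, of 1] by simp
    moreover have "P ((y # xs) ! (i - 1)) ((y # xs) ! i)" if "0 < i" "i < length (y # xs)" for i
      using H[rule_format, of "Suc i"] that by (cases i) auto
    ultimately show "successively P (x # y # xs)" using "3" by auto
  qed
qed auto

definition BE_step :: "nat \<Rightarrow> nat \<Rightarrow> bool" where
  "BE_step x y \<longleftrightarrow>
     (odd y \<longrightarrow> x + 3 \<le> y \<and> y \<le> x + 4) \<and> (even y \<longrightarrow> x \<le> y \<and> y \<le> x + 1)"

definition next_even :: "nat \<Rightarrow> nat" where
  "next_even x = (if even x then x else Suc x)"

lemma BE_step_iff: "BE_step x y \<longleftrightarrow> y = next_even x \<or> y = next_even x + 3"
  unfolding BE_step_def next_even_def by presburger

lemma sorted_if_successively_BE_step: "successively BE_step xs \<Longrightarrow> sorted xs"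
  by (induction BE_step xs rule: successively.induct) (auto simp: BE_step_def)

lemma in_BE_iff_successively:
  "in_BE \<beta> \<longleftrightarrow> (\<exists>a l. \<beta> = a # l \<and> a \<in> {2, 3} \<and> successively BE_step (a # l))"
proof
  assume H: "in_BE \<beta>"
  then obtain a l where "\<beta> = a # l" unfolding in_BE_def by (cases \<beta>) auto
  moreover have "successively BE_step \<beta>"
    using H unfolding in_BE_def successively_iff_nth BE_step_def by auto
  ultimately show "\<exists>a l. \<beta> = a # l \<and> a \<in> {2, 3} \<and> successively BE_step (a # l)"
    using H unfolding in_BE_def by auto
next
  assume "\<exists>a l. \<beta> = a # l \<and> a \<in> {2, 3} \<and> successively BE_step (a # l)"
  then obtain a l where \<beta>: "\<beta> = a # l" "a \<in> {2, 3}" "successively BE_step \<beta>" by blast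
  have "sorted \<beta>" using \<beta>(3) by (rule sorted_if_successively_BE_step)
  with \<beta>(1,2) have "\<forall>x\<in>set \<beta>. 0 < x" by auto
  with \<beta> \<open>sorted \<beta>\<close> show "in_BE \<beta>"
    unfolding in_BE_def successively_iff_nth BE_step_def by auto
qed

definition BE_tails :: "nat \<Rightarrow> nat \<Rightarrow> nat list set" where
  "BE_tails n a = {l. length l = n \<and> successively BE_step (a # l)}"

lemma BE_tails_0: "BE_tails 0 a = {[]}"
  by (auto simp: BE_tails_def)

lemma BE_tails_Suc:
  "BE_tails (Suc n) a =
     Cons (next_even a) ` BE_tails n (next_even a) \<union> Cons (next_even a + 3) ` BE_tails n (next_even a + 3)"
proof (rule set_eqI)
  fix l
  show "l \<in> BE_tails (Suc n) a \<longleftrightarrow>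
      l \<in> Cons (next_even a) ` BE_tails n (next_even a) \<union> Cons (next_even a + 3) ` BE_tails n (next_even a + 3)"
    by (cases l) (auto simp: BE_tails_def BE_step_iff)
qed

lemma finite_BE_tails: "finite (BE_tails n a)"
  by (induction n arbitrary: a) (auto simp: BE_tails_0 BE_tails_Suc)

definition tails_gf :: "complex \<Rightarrow> nat \<Rightarrow> nat \<Rightarrow> complex" where
  "tails_gf q n a = (\<Sum>l\<in>BE_tails n a. q ^ sum_list l)"

lemma tails_gf_Suc:
  "tails_gf q (Suc n) a =
     q ^ next_even a * tails_gf q n (next_even a) + q ^ (next_even a + 3) * tails_gf q n (next_even a + 3)"
proof -
  let ?A = "Cons (next_even a) ` BE_tails n (next_even a)"
  let ?B = "Cons (next_even a + 3) ` BE_tails n (next_even a + 3)"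
  have "tails_gf q (Suc n) a = (\<Sum>l\<in>?A. q ^ sum_list l) + (\<Sum>l\<in>?B. q ^ sum_list l)"
    unfolding tails_gf_def BE_tails_Suc by (rule sum.union_disjoint) (auto simp: finite_BE_tails)
  then show ?thesis
    by (simp add: sum.reindex tails_gf_def sum_distrib_left power_add)
qed

lemma tails_gf_eq: "tails_gf q n a = q ^ (n * next_even a) * qpoch (- (q ^ 3)) (q ^ 4) n"
proof (induction n arbitrary: a)
  case 0
  then show ?case by (simp add: tails_gf_def BE_tails_0 qpoch_def)
next
  case (Suc n)
  let ?e = "next_even a"
  have "next_even ?e = ?e" "next_even (?e + 3) = ?e + 4"
    by (auto simp: next_even_def)
  then have "tails_gf q (Suc n) a =
      (q ^ ?e * q ^ (n * ?e) + q ^ (?e + 3) * q ^ (n * (?e + 4))) * qpoch (- (q ^ 3)) (q ^ 4) n"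
    by (simp add: tails_gf_Suc Suc algebra_simps)
  also have "q ^ ?e * q ^ (n * ?e) + q ^ (?e + 3) * q ^ (n * (?e + 4))
      = q ^ (Suc n * ?e) * (1 + q ^ 3 * (q ^ 4) ^ n)"
    by (simp add: algebra_simps flip: power_add power_mult)
  finally show ?case
    by (simp add: qpoch_Suc)
qed

lemma bE_Suc_eq: "bE (Suc n) q = qpoch (- (q ^ 3)) (q ^ 4) n * q ^ (2 * n + 2) * (1 + q ^ (2 * n + 1))"
proof -
  have parts: "{\<beta>. length \<beta> = Suc n \<and> in_BE \<beta>} = Cons 2 ` BE_tails n 2 \<union> Cons 3 ` BE_tails n 3"
    by (auto simp: in_BE_iff_successively BE_tails_def)
  have "bE (Suc n) q = (\<Sum>\<beta>\<in>Cons 2 ` BE_tails n 2. q ^ sum_list \<beta>) + (\<Sum>\<beta>\<in>Cons 3 ` BE_tails n 3. q ^ sum_list \<beta>)"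
    unfolding bE_def parts by (simp, rule sum.union_disjoint) (auto simp: finite_BE_tails)
  also have "\<dots> = q ^ 2 * tails_gf q n 2 + q ^ 3 * tails_gf q n 3"
    by (simp add: sum.reindex tails_gf_def sum_distrib_left power_add power2_eq_square power3_eq_cube mult.assoc)
  also have "\<dots> = (q ^ 2 * q ^ (2 * n) + q ^ 3 * q ^ (4 * n)) * qpoch (- (q ^ 3)) (q ^ 4) n"
    by (simp add: tails_gf_eq next_even_def algebra_simps)
  also have "q ^ 2 * q ^ (2 * n) = q ^ (2 * n + 2)"
    unfolding power_add[symmetric] by (rule arg_cong[where f = "power q"]) simp
  also have "q ^ 3 * q ^ (4 * n) = q ^ (2 * n + 2) * q ^ (2 * n + 1)"
    unfolding power_add[symmetric] by (rule arg_cong[where f = "power q"]) simp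
  finally show ?thesis
    by (simp only: algebra_simps mult_1_left)
qed

lemma qpoch_nonzero:
  fixes a q :: complex
  assumes "norm a < 1" "norm q \<le> 1"
  shows "qpoch a q n \<noteq> 0"
proof -
  have "1 - a * q ^ j \<noteq> 0" for j
  proof
    assume "1 - a * q ^ j = 0"
    then have "norm (a * q ^ j) = 1" by simp
    moreover have "norm (a * q ^ j) \<le> norm a"
      using assms by (simp add: norm_mult norm_power mult_left_le power_le_one)
    ultimately show False using assms(1) by simp
  qed
  then show ?thesis by (simp add: qpoch_def)
qed

lemma summable_ratio_tendsto:
  fixes f R :: "nat \<Rightarrow> 'a :: {banach, real_normed_div_algebra}"
  assumes ratio: "\<And>n. f (Suc n) = R n * f n" and lim: "R \<longlonglongrightarrow> L" and "norm L < 1"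
  shows "summable f"
proof -
  define c where "c = (1 + norm L) / 2"
  have "c < 1" "norm L < c" using \<open>norm L < 1\<close> by (auto simp: c_def)
  from order_tendstoD(2)[OF tendsto_norm[OF lim] \<open>norm L < c\<close>]
  obtain N where N: "\<And>n. n \<ge> N \<Longrightarrow> norm (R n) < c"
    by (auto simp: eventually_sequentially)
  show ?thesis
  proof (rule summable_ratio_test[OF \<open>c < 1\<close>])
    fix n assume "n \<ge> N"
    then show "norm (f (Suc n)) \<le> c * norm (f n)"
      using N[of n] by (simp add: ratio norm_mult mult_right_mono)
  qed
qed

lemma norm_power_less_one:
  fixes q :: "'a :: real_normed_div_algebra"
  shows "norm q < 1 \<Longrightarrow> 0 < k \<Longrightarrow> norm (q ^ k) < 1"
  by (simp add: norm_power power_less_one_iff)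

definition bE_ratio :: "complex \<Rightarrow> nat \<Rightarrow> complex" where
  "bE_ratio q n = (1 + q ^ 3 * (q ^ 4) ^ n) * q ^ 2 * (1 + q ^ 3 * (q ^ 2) ^ n)
      / ((1 + q * (q ^ 2) ^ n) * (1 - q ^ 4 * (q ^ 2) ^ n))"

lemma bE_quotient_Suc:
  fixes q :: complex
  assumes "norm q < 1"
  shows "bE (Suc (Suc n)) q / qpoch (q ^ 2) (q ^ 2) (Suc (Suc n)) =
    bE_ratio q n * (bE (Suc n) q / qpoch (q ^ 2) (q ^ 2) (Suc n))"
proof -
  define P where "P = qpoch (- (q ^ 3)) (q ^ 4) n"
  define D where "D = qpoch (q ^ 2) (q ^ 2) (Suc n)"
  define X where "X = q ^ (2 * n + 2)"
  have pow_odd: "q ^ (2 * n + 1) = q * (q ^ 2) ^ n"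
    by (simp add: power_mult)
  have pow: "q ^ (2 * n + 4) = q ^ 4 * (q ^ 2) ^ n"
    "q ^ (2 * Suc n + 1) = q ^ 3 * (q ^ 2) ^ n" "q ^ (2 * Suc n + 2) = q ^ 2 * X"
    "q ^ 2 * (q ^ 2) ^ Suc n = q ^ 4 * (q ^ 2) ^ n"
    unfolding X_def power_mult[symmetric] power_add[symmetric]
    by (rule arg_cong[where f = "power q"], simp)+
  have "D \<noteq> 0"
    unfolding D_def using norm_power_less_one[OF assms, of 2] by (intro qpoch_nonzero) auto
  have "1 + q * (q ^ 2) ^ n \<noteq> 0"
  proof
    assume "1 + q * (q ^ 2) ^ n = 0"
    then have "norm (q ^ (2 * n + 1)) = 1"
      unfolding pow_odd by (simp add: add_eq_0_iff)
    with norm_power_less_one[OF assms, of "2 * n + 1"] show False by simp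
  qed
  have "1 - q ^ 4 * (q ^ 2) ^ n \<noteq> 0"
    using norm_power_less_one[OF assms, of "2 * n + 4"] by (auto simp: pow(1))
  from pow_odd pow have
    "bE (Suc (Suc n)) q = P * (1 + q ^ 3 * (q ^ 4) ^ n) * (q ^ 2 * X) * (1 + q ^ 3 * (q ^ 2) ^ n)"
    "bE (Suc n) q = P * X * (1 + q * (q ^ 2) ^ n)"
    "qpoch (q ^ 2) (q ^ 2) (Suc (Suc n)) = D * (1 - q ^ 4 * (q ^ 2) ^ n)"
    by (simp_all only: bE_Suc_eq qpoch_Suc P_def D_def X_def) simp_all
  with \<open>D \<noteq> 0\<close> \<open>1 + q * (q ^ 2) ^ n \<noteq> 0\<close> \<open>1 - q ^ 4 * (q ^ 2) ^ n \<noteq> 0\<close> show ?thesis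
    by (simp add: bE_ratio_def divide_simps flip: D_def)
qed

lemma bE_ratio_tendsto:
  fixes q :: complex
  assumes "norm q < 1"
  shows "bE_ratio q \<longlonglongrightarrow> q ^ 2"
proof -
  have "bE_ratio q \<longlonglongrightarrow> (1 + q ^ 3 * 0) * q ^ 2 * (1 + q ^ 3 * 0) / ((1 + q * 0) * (1 - q ^ 4 * 0))"
    unfolding bE_ratio_def using norm_power_less_one[OF assms]
    by (intro tendsto_intros LIMSEQ_power_zero) simp_all
  then show ?thesis by simp
qed

theorem theorem16:
  fixes q :: complex
  assumes "norm q < 1"
  shows "summable (\<lambda>n. bE n q / qpoch (q^2) (q^2) n)
    \<and> summable (\<lambda>m. let n = m + 2 in
          qpoch (- (q^3)) (q^4) (n - 1) * q^(2*n) * (1 + q^(2*n - 1)) / qpoch (q^2) (q^2) n)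
    \<and> (\<Sum>n. bE n q / qpoch (q^2) (q^2) n)
      = 1 + (q^2 + q^3) / (1 - q^2)
        + (\<Sum>m. let n = m + 2 in
          qpoch (- (q^3)) (q^4) (n - 1) * q^(2*n) * (1 + q^(2*n - 1)) / qpoch (q^2) (q^2) n)"
proof -
  define g where "g n = bE n q / qpoch (q ^ 2) (q ^ 2) n" for n
  have "summable (\<lambda>n. g (Suc n))"
  proof (rule summable_ratio_tendsto[OF _ bE_ratio_tendsto[OF assms]])
    show "norm (q ^ 2) < 1"
      using norm_power_less_one[OF assms] by simp
  qed (simp only: g_def bE_quotient_Suc[OF assms])
  then have summable_g: "summable g"
    by (simp only: summable_Suc_iff)
  have tail: "(\<lambda>m. let n = m + 2 in
      qpoch (- (q^3)) (q^4) (n - 1) * q^(2*n) * (1 + q^(2*n - 1)) / qpoch (q^2) (q^2) n)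
    = (\<lambda>m. g (m + 2))"
    by (simp add: g_def bE_Suc_eq numeral_2_eq_2 algebra_simps)
  have "g 0 = 1"
    by (simp add: g_def bE_def qpoch_def)
  moreover have "g 1 = (q ^ 2 + q ^ 3) / (1 - q ^ 2)"
    using bE_Suc_eq[of 0 q] by (simp add: g_def qpoch_def algebra_simps power2_eq_square power3_eq_cube)
  ultimately have "suminf g = 1 + (q ^ 2 + q ^ 3) / (1 - q ^ 2) + (\<Sum>m. g (m + 2))"
    using suminf_split_initial_segment[OF summable_g, of 2] by (simp add: numeral_2_eq_2)
  moreover have "summable (\<lambda>m. g (m + 2))"
    using summable_g by (rule summable_ignore_initial_segment)
  ultimately show ?thesis
    unfolding tail g_def[symmetric] using summable_g by blast
qed

end
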